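(* Let $A$ be an algebra of Jordan type half over a field $\mathbb{F}$ of characteristic zero. If $a,b\in A$ are primitive axes of Jordan type half with $(a,b)=1$, then every non-zero idempotent of $J=\langle\langle a,b\rangle\rangle$ is a primitive axis of Jordan type half in $A$; that is, $J$ is solid.
   Context: All algebras are commutative, not necessarily associative; $A_\lambda(x)=\{u\in A:xu=\lambda u\}$. A primitive axis of Jordan type half is $x\neq0$ with $x^2=x$, $A=A_1(x)\oplus A_0(x)\oplus A_{1/2}(x)$, $A_1(x)=\mathbb{F}x$, and fusion rules $A_1A_1\subseteq A_1$, $A_1A_0=0$, $A_0A_0\subseteq A_0$, $A_1A_{1/2},A_0A_{1/2}\subseteq A_{1/2}$, $A_{1/2}A_{1/2}\subseteq A_1\oplus A_0$. An algebra of Jordan type half is a commutative algebra generated by such axes; it has a unique Frobenius form $(\cdot,\cdot)$ (bilinear, $(uv,w)=(u,vw)$, $(x,x)=1$ for primitive axes $x$). $J=\langle\langle a,b\rangle\rangle$ is solid if every idempotent $c\in J$ with $c\neq0$ and $c\neq1_J$ (the identity of $J$, if it exists; here $J$ has none) is a primitive axis of Jordan type half in $A$. *)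

theory Defs
  imports Main "HOL.Vector_Spaces"
begin

definition comm_algebra :: "('k::field \<Rightarrow> 'v::ab_group_add \<Rightarrow> 'v) \<Rightarrow> ('v \<Rightarrow> 'v \<Rightarrow> 'v) \<Rightarrow> bool" where
  "comm_algebra sc mu \<longleftrightarrow> vector_space sc
     \<and> (\<forall>u v. mu u v = mu v u)
     \<and> (\<forall>u v w. mu (u + v) w = mu u w + mu v w)
     \<and> (\<forall>t u v. mu (sc t u) v = sc t (mu u v))"

definition eigsp :: "('k::field \<Rightarrow> 'v::ab_group_add \<Rightarrow> 'v) \<Rightarrow> ('v \<Rightarrow> 'v \<Rightarrow> 'v) \<Rightarrow> 'v \<Rightarrow> 'k \<Rightarrow> 'v set" where
  "eigsp sc mu x l = {u. mu x u = sc l u}"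

inductive_set gen_subalg :: "('k::field \<Rightarrow> 'v::ab_group_add \<Rightarrow> 'v) \<Rightarrow> ('v \<Rightarrow> 'v \<Rightarrow> 'v) \<Rightarrow> 'v set \<Rightarrow> 'v set"
  for sc mu S where
  gen_base: "x \<in> S \<Longrightarrow> x \<in> gen_subalg sc mu S"
| gen_zero: "0 \<in> gen_subalg sc mu S"
| gen_add: "x \<in> gen_subalg sc mu S \<Longrightarrow> y \<in> gen_subalg sc mu S \<Longrightarrow> x + y \<in> gen_subalg sc mu S"
| gen_scale: "x \<in> gen_subalg sc mu S \<Longrightarrow> sc t x \<in> gen_subalg sc mu S"
| gen_mult: "x \<in> gen_subalg sc mu S \<Longrightarrow> y \<in> gen_subalg sc mu S \<Longrightarrow> mu x y \<in> gen_subalg sc mu S"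

definition primitive_axis :: "('k::field \<Rightarrow> 'v::ab_group_add \<Rightarrow> 'v) \<Rightarrow> ('v \<Rightarrow> 'v \<Rightarrow> 'v) \<Rightarrow> 'v \<Rightarrow> bool" where
  "primitive_axis sc mu x \<longleftrightarrow>
     (let A1 = eigsp sc mu x 1; A0 = eigsp sc mu x 0; Ah = eigsp sc mu x (1/2) in
       x \<noteq> 0 \<and> mu x x = x
     \<and> (\<forall>u. \<exists>u1 u0 uh. u1 \<in> A1 \<and> u0 \<in> A0 \<and> uh \<in> Ah \<and> u = u1 + u0 + uh)
     \<and> A1 = range (\<lambda>t. sc t x)
     \<and> (\<forall>u\<in>A1. \<forall>v\<in>A1. mu u v \<in> A1)
     \<and> (\<forall>u\<in>A1. \<forall>v\<in>A0. mu u v = 0)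
     \<and> (\<forall>u\<in>A0. \<forall>v\<in>A0. mu u v \<in> A0)
     \<and> (\<forall>u\<in>A1. \<forall>v\<in>Ah. mu u v \<in> Ah)
     \<and> (\<forall>u\<in>A0. \<forall>v\<in>Ah. mu u v \<in> Ah)
     \<and> (\<forall>u\<in>Ah. \<forall>v\<in>Ah. \<exists>w1 w0. w1 \<in> A1 \<and> w0 \<in> A0 \<and> mu u v = w1 + w0))"

definition jordan_half_algebra :: "('k::field \<Rightarrow> 'v::ab_group_add \<Rightarrow> 'v) \<Rightarrow> ('v \<Rightarrow> 'v \<Rightarrow> 'v) \<Rightarrow> bool" where
  "jordan_half_algebra sc mu \<longleftrightarrow> comm_algebra sc mu
     \<and> gen_subalg sc mu {x. primitive_axis sc mu x} = UNIV"

definition frobenius_form :: "('k::field \<Rightarrow> 'v::ab_group_add \<Rightarrow> 'v) \<Rightarrow> ('v \<Rightarrow> 'v \<Rightarrow> 'v) \<Rightarrow> ('v \<Rightarrow> 'v \<Rightarrow> 'k) \<Rightarrow> bool" where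
  "frobenius_form sc mu B \<longleftrightarrow>
       (\<forall>u v w. B (u + v) w = B u w + B v w)
     \<and> (\<forall>u v w. B u (v + w) = B u v + B u w)
     \<and> (\<forall>t u v. B (sc t u) v = t * B u v)
     \<and> (\<forall>t u v. B u (sc t v) = t * B u v)
     \<and> (\<forall>u v w. B (mu u v) w = B u (mu v w))
     \<and> (\<forall>x. primitive_axis sc mu x \<longrightarrow> B x x = 1)"

end

theory Submission
  imports Defs
begin

text \<open>
  Write b = a + z + h with z, h in the 0- and 1/2-eigenspaces of a; the coefficient of a is
  (a,b) = 1. The fusion rules for a together with b b = b and the 1-eigenspace of b force
  z h = 0, h h = z and z z = 0, so J is spanned by a, h, z and its non-zero idempotents are
  exactly c(x) = a + x h + x^2 z. The Miyamoto involutions of a and b map c(x) to c(-x) and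
  c(2 - x), so every c(n), n a natural number, is an axis. Being a primitive axis is
  equivalent to finitely many identities that are polynomial in c (the Frobenius form
  describes the 1-eigenspace); along the curve they become polynomial identities in x that
  hold at infinitely many points, hence everywhere in characteristic zero.
\<close>

section \<open>Polynomial maps from the scalars into a vector space\<close>

context vector_space
begin

inductive poly_map_deg :: "nat \<Rightarrow> ('a \<Rightarrow> 'b) \<Rightarrow> bool" where
  const: "poly_map_deg n (\<lambda>x. w)"
| add: "poly_map_deg n f \<Longrightarrow> poly_map_deg n g \<Longrightarrow> poly_map_deg n (\<lambda>x. f x + g x)"
| var_scale: "poly_map_deg n f \<Longrightarrow> poly_map_deg (Suc n) (\<lambda>x. x *s f x)"

lemma poly_map_deg_mono: "poly_map_deg m f \<Longrightarrow> m \<le> n \<Longrightarrow> poly_map_deg n f"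
proof (induction arbitrary: n rule: poly_map_deg.induct)
  case (var_scale m f)
  then obtain n' where "n = Suc n'" "m \<le> n'"
    by (metis Suc_le_D Suc_le_mono)
  with var_scale.IH show ?case
    by (simp add: poly_map_deg.var_scale)
qed (simp_all add: poly_map_deg.intros)

lemma poly_map_deg_linear:
  assumes "poly_map_deg n f"
    and "\<And>u v. L (u + v) = L u + L v" and "\<And>t u. L (t *s u) = t *s L u"
  shows "poly_map_deg n (\<lambda>x. L (f x))"
  using assms(1)
proof (induction rule: poly_map_deg.induct)
  case (var_scale n f)
  then show ?case
    by (simp add: assms(3) poly_map_deg.var_scale)
qed (simp_all add: assms(2) poly_map_deg.intros)

lemma poly_map_deg_scale: "poly_map_deg n f \<Longrightarrow> poly_map_deg n (\<lambda>x. t *s f x)"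
  by (rule poly_map_deg_linear) (simp_all add: scale_right_distrib scale_left_commute)

lemma poly_map_deg_0_const: "poly_map_deg 0 f \<Longrightarrow> f x = f y"
  by (induction "0::nat" f rule: poly_map_deg.induct) simp_all

lemma poly_map_deg_factor:
  assumes "poly_map_deg n f"
  shows "\<exists>g. poly_map_deg (n - 1) g \<and> (\<forall>x. f x - f r = (x - r) *s g x)"
  using assms
proof (induction rule: poly_map_deg.induct)
  case (const n w)
  then show ?case
    using poly_map_deg.const[of "n - 1" 0] by auto
next
  case (add n f g)
  then obtain f' g' where "poly_map_deg (n - 1) f'" "\<forall>x. f x - f r = (x - r) *s f' x"
    and "poly_map_deg (n - 1) g'" "\<forall>x. g x - g r = (x - r) *s g' x"
    by blast
  then have "poly_map_deg (n - 1) (\<lambda>x. f' x + g' x)"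
    and "\<forall>x. (f x + g x) - (f r + g r) = (x - r) *s (f' x + g' x)"
    by (simp_all add: poly_map_deg.add algebra_simps)
  then show ?case
    by blast
next
  case (var_scale n f)
  then obtain g where g: "poly_map_deg (n - 1) g" "\<forall>x. f x - f r = (x - r) *s g x"
    by blast
  have "x *s f x - r *s f r = (x - r) *s (f x + r *s g x)" for x
  proof -
    have "r *s (f x - f r) = r *s ((x - r) *s g x)"
      using g(2) by simp
    then show ?thesis
      by (simp add: algebra_simps)
  qed
  moreover have "poly_map_deg n (\<lambda>x. f x + r *s g x)"
    using var_scale.hyps poly_map_deg_mono[OF g(1)]
    by (simp add: poly_map_deg.add poly_map_deg_scale)
  ultimately show ?case
    by auto
qed

lemma poly_map_deg_eq_0:
  assumes "poly_map_deg n f" and "infinite {x. f x = 0}"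
  shows "f x = 0"
  using assms
proof (induction n arbitrary: f)
  case 0
  then obtain y where "f y = 0"
    using infinite_imp_nonempty by fastforce
  then show ?case
    using poly_map_deg_0_const[OF "0.prems"(1)] by metis
next
  case (Suc n)
  then obtain r where r: "f r = 0"
    using infinite_imp_nonempty by fastforce
  obtain g where g: "poly_map_deg n g" "\<forall>x. f x - f r = (x - r) *s g x"
    using poly_map_deg_factor[OF Suc.prems(1), of r] by auto
  have "{x. f x = 0} - {r} \<subseteq> {x. g x = 0}"
    using g(2) r by auto
  then have "infinite {x. g x = 0}"
    by (rule infinite_super) (rule infinite_remove[OF Suc.prems(2)])
  then have "g x = 0"
    by (rule Suc.IH[OF g(1)])
  then show ?case
    using g(2) r by (metis diff_0_right scale_zero_right)
qed

definition poly_map :: "('a \<Rightarrow> 'b) \<Rightarrow> bool" where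
  "poly_map f \<longleftrightarrow> (\<exists>n. poly_map_deg n f)"

lemma poly_map_const: "poly_map (\<lambda>x. w)"
  using poly_map_deg.const poly_map_def by blast

lemma poly_map_add: "poly_map f \<Longrightarrow> poly_map g \<Longrightarrow> poly_map (\<lambda>x. f x + g x)"
  unfolding poly_map_def
  by (metis max.cobounded1 max.cobounded2 poly_map_deg.add poly_map_deg_mono)

lemma poly_map_scale: "poly_map f \<Longrightarrow> poly_map (\<lambda>x. t *s f x)"
  unfolding poly_map_def using poly_map_deg_scale by blast

lemma poly_map_diff: "poly_map f \<Longrightarrow> poly_map g \<Longrightarrow> poly_map (\<lambda>x. f x - g x)"
  using poly_map_add[of f "\<lambda>x. (-1) *s g x"] poly_map_scale[of g "-1"] by simp

lemma poly_map_var_scale: "poly_map f \<Longrightarrow> poly_map (\<lambda>x. x *s f x)"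
  unfolding poly_map_def using poly_map_deg.var_scale by blast

lemma poly_map_linear:
  "poly_map f \<Longrightarrow> (\<And>u v. L (u + v) = L u + L v) \<Longrightarrow> (\<And>t u. L (t *s u) = t *s L u)
    \<Longrightarrow> poly_map (\<lambda>x. L (f x))"
  unfolding poly_map_def using poly_map_deg_linear by blast

lemma poly_map_functional_scale:
  assumes "poly_map f" and "poly_map g"
    and \<phi>_add: "\<And>u v. \<phi> (u + v) = \<phi> u + \<phi> v" and \<phi>_scale: "\<And>t u. \<phi> (t *s u) = t * \<phi> u"
  shows "poly_map (\<lambda>x. \<phi> (f x) *s g x)"
proof -
  obtain n where "poly_map_deg n f"
    using assms(1) poly_map_def by blast
  then show ?thesis
  proof (induction rule: poly_map_deg.induct)
    case (const n w)
    then show ?case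
      by (rule poly_map_scale[OF assms(2)])
  next
    case (add n f f')
    then show ?case
      using poly_map_add by (simp add: \<phi>_add scale_left_distrib)
  next
    case (var_scale n f)
    then show ?case
      using poly_map_var_scale[OF var_scale.IH] by (simp add: \<phi>_scale)
  qed
qed

lemma poly_map_eq_0: "poly_map f \<Longrightarrow> infinite {x. f x = 0} \<Longrightarrow> f x = 0"
  unfolding poly_map_def using poly_map_deg_eq_0 by blast

end

section \<open>Commutative algebras, Peirce projections and primitive axes\<close>

locale commutative_algebra = vector_space scale
  for scale :: "'k::field_char_0 \<Rightarrow> 'v::ab_group_add \<Rightarrow> 'v" (infixr \<open>*s\<close> 75) +
  fixes mult :: "'v \<Rightarrow> 'v \<Rightarrow> 'v" (infixl \<open>\<cdot>\<close> 70)
  assumes mult_commute: "u \<cdot> v = v \<cdot> u"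
    and mult_add_left: "(u + v) \<cdot> w = u \<cdot> w + v \<cdot> w"
    and mult_scale_left: "(t *s u) \<cdot> v = t *s (u \<cdot> v)"
begin

abbreviation axis :: "'v \<Rightarrow> bool" where
  "axis \<equiv> primitive_axis scale mult"

lemma mult_add_right: "w \<cdot> (u + v) = w \<cdot> u + w \<cdot> v"
  by (simp add: mult_commute[of w] mult_add_left)

lemma mult_scale_right: "u \<cdot> (t *s v) = t *s (u \<cdot> v)"
  by (simp add: mult_commute[of u] mult_scale_left)

lemma mult_zero_left [simp]: "0 \<cdot> v = 0"
  using mult_scale_left[of 0 0 v] by simp

lemma mult_zero_right [simp]: "v \<cdot> 0 = 0"
  using mult_scale_right[of v 0 0] by simp

lemma mult_minus_left: "(- u) \<cdot> v = - (u \<cdot> v)"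
  using mult_scale_left[of "-1" u v] by simp

lemma mult_minus_right: "v \<cdot> (- u) = - (v \<cdot> u)"
  by (metis mult_commute mult_minus_left)

lemma mult_diff_left: "(u - w) \<cdot> v = u \<cdot> v - w \<cdot> v"
  using mult_add_left[of u "- w" v] by (simp add: mult_minus_left)

lemma mult_diff_right: "v \<cdot> (u - w) = v \<cdot> u - v \<cdot> w"
  using mult_add_right[of v u "- w"] by (simp add: mult_minus_right)

lemmas mult_distribs = mult_add_left mult_add_right mult_diff_left mult_diff_right
  mult_scale_left mult_scale_right mult_minus_left mult_minus_right

lemma scale_two: "2 *s v = v + v"
  using scale_left_distrib[of 1 1 v] by simp

lemma mult_self_sum3:
  "(x + y + w) \<cdot> (x + y + w)
     = x \<cdot> x + y \<cdot> y + w \<cdot> w + 2 *s (x \<cdot> y) + 2 *s (x \<cdot> w) + 2 *s (y \<cdot> w)"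
  by (simp add: mult_add_left mult_add_right scale_two mult_commute[of y x] mult_commute[of w x]
      mult_commute[of w y] add_ac)

lemma poly_map_mult:
  assumes "poly_map f" and "poly_map g"
  shows "poly_map (\<lambda>x. f x \<cdot> g x)"
proof -
  obtain n where "poly_map_deg n f"
    using assms(1) poly_map_def by blast
  then show ?thesis
  proof (induction rule: poly_map_deg.induct)
    case (const n w)
    show ?case
      by (rule poly_map_linear[OF assms(2)]) (simp_all add: mult_add_right mult_scale_right)
  next
    case (add n f f')
    then show ?case
      by (simp add: mult_add_left poly_map_add)
  next
    case (var_scale n f)
    then show ?case
      by (simp add: mult_scale_left poly_map_var_scale)
  qed
qed

lemma poly_map_eq_on_nat:
  assumes "poly_map f" and "poly_map g" and "\<And>n. f (of_nat n) = g (of_nat n)"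
  shows "f x = g x"
proof -
  have "range of_nat \<subseteq> {x. f x - g x = 0}"
    using assms(3) by auto
  moreover have "infinite (range (of_nat :: nat \<Rightarrow> 'k))"
  proof
    assume "finite (range (of_nat :: nat \<Rightarrow> 'k))"
    moreover have "inj (of_nat :: nat \<Rightarrow> 'k)"
      by (simp add: inj_on_def)
    ultimately show False
      using finite_imageD by blast
  qed
  ultimately have "infinite {x. f x - g x = 0}"
    using infinite_super by blast
  then show ?thesis
    using poly_map_eq_0[OF poly_map_diff[OF assms(1,2)]] by simp
qed

text \<open>
  When the multiplication operator L of c satisfies L (L - 1) (2 L - 1) = 0, these are the
  Lagrange interpolation polynomials in L for the eigenvalues 1, 0 and 1/2.
\<close>

definition proj1 :: "'v \<Rightarrow> 'v \<Rightarrow> 'v" where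
  "proj1 c u = 2 *s (c \<cdot> (c \<cdot> u)) - c \<cdot> u"

definition proj0 :: "'v \<Rightarrow> 'v \<Rightarrow> 'v" where
  "proj0 c u = 2 *s (c \<cdot> (c \<cdot> u)) - 3 *s (c \<cdot> u) + u"

definition proj_half :: "'v \<Rightarrow> 'v \<Rightarrow> 'v" where
  "proj_half c u = u - proj1 c u - proj0 c u"

lemma proj_add:
  "proj1 c (u + v) = proj1 c u + proj1 c v"
  "proj0 c (u + v) = proj0 c u + proj0 c v"
  "proj_half c (u + v) = proj_half c u + proj_half c v"
  by (simp_all add: proj1_def proj0_def proj_half_def mult_add_right algebra_simps)

lemma proj_scale:
  "proj1 c (t *s u) = t *s proj1 c u"
  "proj0 c (t *s u) = t *s proj0 c u"
  "proj_half c (t *s u) = t *s proj_half c u"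
  by (simp_all add: proj1_def proj0_def proj_half_def mult_scale_right algebra_simps)

lemma proj_diff:
  "proj1 c (u - v) = proj1 c u - proj1 c v"
  "proj0 c (u - v) = proj0 c u - proj0 c v"
  "proj_half c (u - v) = proj_half c u - proj_half c v"
  using proj_add[of c u "- v"] proj_scale[of c "-1" v] by simp_all

lemma proj_eigenvector:
  assumes "c \<cdot> v = \<alpha> *s v"
  shows "proj1 c v = (2 * \<alpha>\<^sup>2 - \<alpha>) *s v"
    and "proj0 c v = (2 * \<alpha>\<^sup>2 - 3 * \<alpha> + 1) *s v"
    and "proj_half c v = (4 * \<alpha> - 4 * \<alpha>\<^sup>2) *s v"
proof -
  have "c \<cdot> (c \<cdot> v) = \<alpha>\<^sup>2 *s v"
    by (simp add: assms mult_scale_right power2_eq_square)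
  then show p1: "proj1 c v = (2 * \<alpha>\<^sup>2 - \<alpha>) *s v"
    and p0: "proj0 c v = (2 * \<alpha>\<^sup>2 - 3 * \<alpha> + 1) *s v"
    by (simp_all add: proj1_def proj0_def assms algebra_simps)
  have "proj_half c v = (1 - (2 * \<alpha>\<^sup>2 - \<alpha>) - (2 * \<alpha>\<^sup>2 - 3 * \<alpha> + 1)) *s v"
    unfolding proj_half_def p1 p0 by (simp only: scale_left_diff_distrib scale_one)
  also have "1 - (2 * \<alpha>\<^sup>2 - \<alpha>) - (2 * \<alpha>\<^sup>2 - 3 * \<alpha> + 1) = 4 * \<alpha> - 4 * \<alpha>\<^sup>2"
    by (simp add: algebra_simps)
  finally show "proj_half c v = (4 * \<alpha> - 4 * \<alpha>\<^sup>2) *s v" .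
qed

lemma proj_eigenvector_1:
  assumes "c \<cdot> v = v"
  shows "proj1 c v = v" and "proj0 c v = 0" and "proj_half c v = 0"
  using proj_eigenvector[of c v 1] assms by simp_all

lemma proj_eigenvector_0:
  assumes "c \<cdot> v = 0"
  shows "proj1 c v = 0" and "proj0 c v = v" and "proj_half c v = 0"
  using proj_eigenvector[of c v 0] assms by simp_all

lemma proj_eigenvector_half:
  assumes "c \<cdot> v = (1/2) *s v"
  shows "proj1 c v = 0" and "proj0 c v = 0" and "proj_half c v = v"
  using proj_eigenvector[of c v "1/2"] assms by (simp_all add: power2_eq_square)

lemma proj_decomposition:
  assumes "c \<cdot> u1 = u1" and "c \<cdot> u0 = 0" and "c \<cdot> uh = (1/2) *s uh"
  shows "proj1 c (u1 + u0 + uh) = u1"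
    and "proj0 c (u1 + u0 + uh) = u0"
    and "proj_half c (u1 + u0 + uh) = uh"
  using proj_eigenvector_1[OF assms(1)] proj_eigenvector_0[OF assms(2)]
    proj_eigenvector_half[OF assms(3)]
  by (simp_all add: proj_add)

lemma proj_sum: "proj1 c u + proj0 c u + proj_half c u = u"
  by (simp add: proj_half_def)

lemma proj_hom:
  assumes f_add: "\<And>u v. f (u + v) = f u + f v" and f_scale: "\<And>t u. f (t *s u) = t *s f u"
    and f_mult: "\<And>u v. f (u \<cdot> v) = f u \<cdot> f v"
  shows "f (proj1 c u) = proj1 (f c) (f u)"
    and "f (proj0 c u) = proj0 (f c) (f u)"
    and "f (proj_half c u) = proj_half (f c) (f u)"
proof -
  have f_diff: "f (u - v) = f u - f v" for u v
    using f_add[of "u - v" v] by (simp add: algebra_simps)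
  then show "f (proj1 c u) = proj1 (f c) (f u)" and "f (proj0 c u) = proj0 (f c) (f u)"
    and "f (proj_half c u) = proj_half (f c) (f u)"
    by (simp_all add: proj1_def proj0_def proj_half_def f_add f_scale f_mult)
qed

lemma primitive_axis_unfold:
  "axis c \<longleftrightarrow>
     c \<noteq> 0 \<and> c \<cdot> c = c
   \<and> (\<forall>u. \<exists>u1 u0 uh. c \<cdot> u1 = u1 \<and> c \<cdot> u0 = 0 \<and> c \<cdot> uh = (1/2) *s uh \<and> u = u1 + u0 + uh)
   \<and> {u. c \<cdot> u = u} = range (\<lambda>t. t *s c)
   \<and> (\<forall>u v. c \<cdot> u = u \<longrightarrow> c \<cdot> v = v \<longrightarrow> c \<cdot> (u \<cdot> v) = u \<cdot> v)
   \<and> (\<forall>u v. c \<cdot> u = u \<longrightarrow> c \<cdot> v = 0 \<longrightarrow> u \<cdot> v = 0)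
   \<and> (\<forall>u v. c \<cdot> u = 0 \<longrightarrow> c \<cdot> v = 0 \<longrightarrow> c \<cdot> (u \<cdot> v) = 0)
   \<and> (\<forall>u v. c \<cdot> u = u \<longrightarrow> c \<cdot> v = (1/2) *s v \<longrightarrow> c \<cdot> (u \<cdot> v) = (1/2) *s (u \<cdot> v))
   \<and> (\<forall>u v. c \<cdot> u = 0 \<longrightarrow> c \<cdot> v = (1/2) *s v \<longrightarrow> c \<cdot> (u \<cdot> v) = (1/2) *s (u \<cdot> v))
   \<and> (\<forall>u v. c \<cdot> u = (1/2) *s u \<longrightarrow> c \<cdot> v = (1/2) *s v
          \<longrightarrow> (\<exists>w1 w0. c \<cdot> w1 = w1 \<and> c \<cdot> w0 = 0 \<and> u \<cdot> v = w1 + w0))"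
  unfolding primitive_axis_def Let_def eigsp_def by simp

lemma axisD:
  assumes "axis c"
  shows axis_nonzero: "c \<noteq> 0"
    and axis_idem: "c \<cdot> c = c"
    and axis_proj1: "c \<cdot> proj1 c u = proj1 c u"
    and axis_proj0: "c \<cdot> proj0 c u = 0"
    and axis_proj_half: "c \<cdot> proj_half c u = (1/2) *s proj_half c u"
    and axis_eigenspace_1: "c \<cdot> w = w \<Longrightarrow> \<exists>t. w = t *s c"
    and axis_fusion_00: "c \<cdot> v = 0 \<Longrightarrow> c \<cdot> w = 0 \<Longrightarrow> c \<cdot> (v \<cdot> w) = 0"
    and axis_fusion_0h:
      "c \<cdot> v = 0 \<Longrightarrow> c \<cdot> w = (1/2) *s w \<Longrightarrow> c \<cdot> (v \<cdot> w) = (1/2) *s (v \<cdot> w)"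
    and axis_fusion_hh:
      "c \<cdot> v = (1/2) *s v \<Longrightarrow> c \<cdot> w = (1/2) *s w \<Longrightarrow> proj_half c (v \<cdot> w) = 0"
proof -
  obtain c: "c \<noteq> 0" "c \<cdot> c = c"
    and dec: "\<forall>u. \<exists>u1 u0 uh. c \<cdot> u1 = u1 \<and> c \<cdot> u0 = 0 \<and> c \<cdot> uh = (1/2) *s uh \<and> u = u1 + u0 + uh"
    and A1: "{u. c \<cdot> u = u} = range (\<lambda>t. t *s c)"
    and A00: "\<forall>u v. c \<cdot> u = 0 \<longrightarrow> c \<cdot> v = 0 \<longrightarrow> c \<cdot> (u \<cdot> v) = 0"
    and A0h: "\<forall>u v. c \<cdot> u = 0 \<longrightarrow> c \<cdot> v = (1/2) *s v \<longrightarrow> c \<cdot> (u \<cdot> v) = (1/2) *s (u \<cdot> v)"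
    and Ahh: "\<forall>u v. c \<cdot> u = (1/2) *s u \<longrightarrow> c \<cdot> v = (1/2) *s v
               \<longrightarrow> (\<exists>w1 w0. c \<cdot> w1 = w1 \<and> c \<cdot> w0 = 0 \<and> u \<cdot> v = w1 + w0)"
    using assms unfolding primitive_axis_unfold by (elim conjE) (rule that; assumption)
  show "c \<noteq> 0" "c \<cdot> c = c"
    by (fact c)+
  obtain u1 u0 uh where "c \<cdot> u1 = u1" "c \<cdot> u0 = 0" "c \<cdot> uh = (1/2) *s uh" "u = u1 + u0 + uh"
    using dec by blast
  then show "c \<cdot> proj1 c u = proj1 c u" "c \<cdot> proj0 c u = 0"
    "c \<cdot> proj_half c u = (1/2) *s proj_half c u"
    using proj_decomposition by simp_all
  show "c \<cdot> w = w \<Longrightarrow> \<exists>t. w = t *s c"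
    using A1 by blast
  show "c \<cdot> v = 0 \<Longrightarrow> c \<cdot> w = 0 \<Longrightarrow> c \<cdot> (v \<cdot> w) = 0"
    and "c \<cdot> v = 0 \<Longrightarrow> c \<cdot> w = (1/2) *s w \<Longrightarrow> c \<cdot> (v \<cdot> w) = (1/2) *s (v \<cdot> w)"
    using A00 A0h by blast+
  assume "c \<cdot> v = (1/2) *s v" "c \<cdot> w = (1/2) *s w"
  then obtain w1 w0 where "c \<cdot> w1 = w1" "c \<cdot> w0 = 0" "v \<cdot> w = w1 + w0"
    using Ahh by blast
  then show "proj_half c (v \<cdot> w) = 0"
    using proj_decomposition(3)[of c w1 w0 0] by simp
qed

lemma axisI:
  assumes "c \<noteq> 0" and idem: "c \<cdot> c = c"
    and proj: "\<And>u. c \<cdot> proj1 c u = proj1 c u" "\<And>u. c \<cdot> proj0 c u = 0"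
      "\<And>u. c \<cdot> proj_half c u = (1/2) *s proj_half c u"
    and A1: "\<And>w. c \<cdot> w = w \<Longrightarrow> \<exists>t. w = t *s c"
    and A00: "\<And>v w. c \<cdot> v = 0 \<Longrightarrow> c \<cdot> w = 0 \<Longrightarrow> c \<cdot> (v \<cdot> w) = 0"
    and A0h: "\<And>v w. c \<cdot> v = 0 \<Longrightarrow> c \<cdot> w = (1/2) *s w \<Longrightarrow> c \<cdot> (v \<cdot> w) = (1/2) *s (v \<cdot> w)"
    and Ahh: "\<And>v w. c \<cdot> v = (1/2) *s v \<Longrightarrow> c \<cdot> w = (1/2) *s w \<Longrightarrow> proj_half c (v \<cdot> w) = 0"
  shows "axis c"
  unfolding primitive_axis_unfold
proof (intro conjI allI impI)
  show "c \<noteq> 0" "c \<cdot> c = c"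
    by (fact assms)+
  show "\<exists>u1 u0 uh. c \<cdot> u1 = u1 \<and> c \<cdot> u0 = 0 \<and> c \<cdot> uh = (1/2) *s uh \<and> u = u1 + u0 + uh" for u
    using proj proj_sum by metis
  show "{u. c \<cdot> u = u} = range (\<lambda>t. t *s c)"
    using A1 idem by (auto simp: mult_scale_right)
  show "c \<cdot> (u \<cdot> v) = u \<cdot> v" if "c \<cdot> u = u" "c \<cdot> v = v" for u v
    using A1[OF that(1)] A1[OF that(2)] idem by (auto simp: mult_scale_left mult_scale_right)
  show "u \<cdot> v = 0" if "c \<cdot> u = u" "c \<cdot> v = 0" for u v
    using A1[OF that(1)] that(2) by (auto simp: mult_scale_left)
  show "c \<cdot> (u \<cdot> v) = (1/2) *s (u \<cdot> v)" if "c \<cdot> u = u" "c \<cdot> v = (1/2) *s v" for u v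
    using A1[OF that(1)] that(2) by (auto simp: mult_scale_left mult_scale_right mult.commute)
  show "c \<cdot> (u \<cdot> v) = 0" if "c \<cdot> u = 0" "c \<cdot> v = 0" for u v
    using A00 that .
  show "c \<cdot> (u \<cdot> v) = (1/2) *s (u \<cdot> v)" if "c \<cdot> u = 0" "c \<cdot> v = (1/2) *s v" for u v
    using A0h that .
  show "\<exists>w1 w0. c \<cdot> w1 = w1 \<and> c \<cdot> w0 = 0 \<and> u \<cdot> v = w1 + w0"
    if "c \<cdot> u = (1/2) *s u" "c \<cdot> v = (1/2) *s v" for u v
    using proj[of "u \<cdot> v"] proj_sum[of c "u \<cdot> v"] Ahh[OF that] by (metis add.right_neutral)
qed

section \<open>Miyamoto involutions\<close>

definition miyamoto :: "'v \<Rightarrow> 'v \<Rightarrow> 'v" where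
  "miyamoto c u = proj1 c u + proj0 c u - proj_half c u"

lemma miyamoto_add: "miyamoto c (u + v) = miyamoto c u + miyamoto c v"
  by (simp add: miyamoto_def proj_add algebra_simps)

lemma miyamoto_scale: "miyamoto c (t *s u) = t *s miyamoto c u"
  by (simp add: miyamoto_def proj_scale algebra_simps)

lemma miyamoto_even: "proj_half c u = 0 \<Longrightarrow> miyamoto c u = u"
  using proj_sum[of c u] by (simp add: miyamoto_def)

lemma miyamoto_odd: "c \<cdot> u = (1/2) *s u \<Longrightarrow> miyamoto c u = - u"
  by (simp add: miyamoto_def proj_eigenvector_half)

text \<open>
  The fusion rules make A a Z/2-graded algebra with even part A_1 + A_0 and odd part A_1/2;
  the Miyamoto involution is the grading automorphism.
\<close>

lemma axis_mult_even_even: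
  assumes "axis c" and "proj_half c u = 0" and "proj_half c v = 0"
  shows "proj_half c (u \<cdot> v) = 0"
proof -
  obtain s t where s: "proj1 c u = s *s c" and t: "proj1 c v = t *s c"
    using axis_eigenspace_1[OF assms(1) axis_proj1[OF assms(1)]] by metis
  have u: "u = s *s c + proj0 c u" and v: "v = t *s c + proj0 c v"
    using proj_sum[of c u] proj_sum[of c v] assms(2,3) s t by simp_all
  have "u \<cdot> v = (s * t) *s c + proj0 c u \<cdot> proj0 c v + 0"
    by (subst u, subst v) (simp add: mult_distribs axis_idem[OF assms(1)] axis_proj0[OF assms(1)]
        mult_commute[of "proj0 c u"])
  then show ?thesis
    using proj_decomposition(3)[of c "(s * t) *s c" "proj0 c u \<cdot> proj0 c v" 0]
      axis_fusion_00[OF assms(1) axis_proj0 axis_proj0] assms(1)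
    by (simp add: mult_scale_right axis_idem)
qed

lemma axis_mult_even_odd:
  assumes "axis c" and "proj_half c u = 0" and "c \<cdot> v = (1/2) *s v"
  shows "c \<cdot> (u \<cdot> v) = (1/2) *s (u \<cdot> v)"
proof -
  obtain s where s: "proj1 c u = s *s c"
    using axis_eigenspace_1[OF assms(1) axis_proj1[OF assms(1)]] by metis
  have u: "u = s *s c + proj0 c u"
    using proj_sum[of c u] assms(2) s by simp
  have "c \<cdot> (proj0 c u \<cdot> v) = (1/2) *s (proj0 c u \<cdot> v)"
    by (rule axis_fusion_0h[OF assms(1) axis_proj0[OF assms(1)] assms(3)])
  then show ?thesis
    by (subst (1 2) u) (simp add: mult_distribs assms(3) scale_right_distrib)
qed

lemma miyamoto_mult:
  assumes "axis c"
  shows "miyamoto c (u \<cdot> v) = miyamoto c u \<cdot> miyamoto c v"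
proof -
  define u' v' where "u' = proj1 c u + proj0 c u" and "v' = proj1 c v + proj0 c v"
  define u'' v'' where "u'' = proj_half c u" and "v'' = proj_half c v"
  have even: "proj_half c u' = 0" "proj_half c v' = 0"
    unfolding u'_def v'_def using assms
    by (simp_all add: proj_add proj_eigenvector_1 proj_eigenvector_0 axis_proj1 axis_proj0)
  have odd: "c \<cdot> u'' = (1/2) *s u''" "c \<cdot> v'' = (1/2) *s v''"
    unfolding u''_def v''_def using assms by (simp_all add: axis_proj_half)
  have u: "u = u' + u''" and v: "v = v' + v''"
    unfolding u'_def u''_def v'_def v''_def by (simp_all add: proj_sum)
  have "miyamoto c (u \<cdot> v) = u' \<cdot> v' - u' \<cdot> v'' - u'' \<cdot> v' + u'' \<cdot> v''"
    using miyamoto_even[OF axis_mult_even_even[OF assms even]]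
      miyamoto_odd[OF axis_mult_even_odd[OF assms even(1) odd(2)]]
      miyamoto_odd[OF axis_mult_even_odd[OF assms even(2) odd(1)]]
      miyamoto_even[OF axis_fusion_hh[OF assms odd]]
    by (simp add: u v mult_distribs miyamoto_add mult_commute[of u'' v'])
  also have "\<dots> = miyamoto c u \<cdot> miyamoto c v"
    using miyamoto_even[OF even(1)] miyamoto_even[OF even(2)] miyamoto_odd[OF odd(1)]
      miyamoto_odd[OF odd(2)]
    by (simp add: u v miyamoto_add mult_distribs algebra_simps)
  finally show ?thesis .
qed

lemma miyamoto_involutive:
  assumes "axis c"
  shows "miyamoto c (miyamoto c u) = u"
proof -
  have even: "proj_half c (proj1 c u + proj0 c u) = 0"
    using assms by (simp add: proj_add proj_eigenvector_1 proj_eigenvector_0 axis_proj1 axis_proj0)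
  have odd: "c \<cdot> (- proj_half c u) = (1/2) *s (- proj_half c u)"
    using assms by (simp add: axis_proj_half mult_minus_right)
  have "miyamoto c u = (proj1 c u + proj0 c u) + (- proj_half c u)"
    by (simp add: miyamoto_def)
  then have "miyamoto c (miyamoto c u)
      = miyamoto c (proj1 c u + proj0 c u) + miyamoto c (- proj_half c u)"
    by (simp only: miyamoto_add)
  also have "\<dots> = proj1 c u + proj0 c u + proj_half c u"
    using miyamoto_even[OF even] miyamoto_odd[OF odd] by simp
  finally show ?thesis
    by (simp only: proj_sum)
qed

lemma axis_automorphic_image:
  assumes f_add: "\<And>u v. f (u + v) = f u + f v" and f_scale: "\<And>t u. f (t *s u) = t *s f u"
    and f_mult: "\<And>u v. f (u \<cdot> v) = f u \<cdot> f v"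
    and g_f: "\<And>u. g (f u) = u" and f_g: "\<And>u. f (g u) = u"
    and q: "axis q"
  shows "axis (f q)"
proof -
  have f0: "f 0 = 0"
    using f_scale[of 0 0] by simp
  note f_proj = proj_hom[OF f_add f_scale f_mult]
  have eigen: "q \<cdot> g v = \<alpha> *s g v" if "f q \<cdot> v = \<alpha> *s v" for v \<alpha>
  proof -
    have "f (q \<cdot> g v) = f (\<alpha> *s g v)"
      using that by (simp add: f_mult f_scale f_g)
    then show ?thesis
      by (metis g_f)
  qed
  have surj: "P v" if "\<And>x. P (f x)" for P v
    using that[of "g v"] by (simp add: f_g)
  show ?thesis
  proof (rule axisI)
    show "f q \<noteq> 0"
      using axis_nonzero[OF q] g_f f0 by metis
    show "f q \<cdot> f q = f q"
      by (simp flip: f_mult add: axis_idem[OF q])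
    show "f q \<cdot> proj1 (f q) u = proj1 (f q) u" "f q \<cdot> proj0 (f q) u = 0"
      "f q \<cdot> proj_half (f q) u = (1/2) *s proj_half (f q) u" for u
      by (rule surj[of _ u], simp flip: f_proj f_mult f_scale add: axisD[OF q] f0)+
    show "\<exists>t. w = t *s f q" if "f q \<cdot> w = w" for w
    proof -
      have "q \<cdot> g w = g w"
        using eigen[of w 1] that by simp
      then obtain t where "g w = t *s q"
        using axis_eigenspace_1[OF q] by blast
      then have "w = f (t *s q)"
        by (metis f_g)
      then show ?thesis
        by (simp add: f_scale)
    qed
    show "f q \<cdot> (v \<cdot> w) = 0" if "f q \<cdot> v = 0" "f q \<cdot> w = 0" for v w
    proof -
      have "q \<cdot> (g v \<cdot> g w) = 0"
        using axis_fusion_00[OF q] eigen[of _ 0] that by simp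
      then show ?thesis
        using f_mult f_g f0 by metis
    qed
    show "f q \<cdot> (v \<cdot> w) = (1/2) *s (v \<cdot> w)" if "f q \<cdot> v = 0" "f q \<cdot> w = (1/2) *s w" for v w
    proof -
      have "q \<cdot> (g v \<cdot> g w) = (1/2) *s (g v \<cdot> g w)"
        using axis_fusion_0h[OF q] eigen[of v 0] eigen[of w "1/2"] that by simp
      then show ?thesis
        using f_mult f_g f_scale by metis
    qed
    show "proj_half (f q) (v \<cdot> w) = 0" if "f q \<cdot> v = (1/2) *s v" "f q \<cdot> w = (1/2) *s w" for v w
    proof -
      have "proj_half q (g v \<cdot> g w) = 0"
        using axis_fusion_hh[OF q] eigen that by simp
      then show ?thesis
        using f_mult f_g f_proj(3) f0 by metis
    qed
  qed
qed

lemma axis_miyamoto_image: "axis c \<Longrightarrow> axis q \<Longrightarrow> axis (miyamoto c q)"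
  by (rule axis_automorphic_image[OF miyamoto_add miyamoto_scale miyamoto_mult
        miyamoto_involutive miyamoto_involutive])

end

section \<open>Primitive axes as solutions of polynomial identities\<close>

locale frobenius_algebra = commutative_algebra +
  fixes B
  assumes frobenius: "frobenius_form scale mult B"
begin

lemma B_add_left: "B (u + v) w = B u w + B v w"
  and B_add_right: "B u (v + w) = B u v + B u w"
  and B_scale_left: "B (t *s u) v = t * B u v"
  and B_scale_right: "B u (t *s v) = t * B u v"
  and B_assoc: "B (u \<cdot> v) w = B u (v \<cdot> w)"
  and B_axis: "axis c \<Longrightarrow> B c c = 1"
  using frobenius unfolding frobenius_form_def by blast+

lemma B_eigenvector_orthogonal:
  assumes "c \<cdot> c = c" and "c \<cdot> v = \<alpha> *s v" and "\<alpha> \<noteq> 1"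
  shows "B c v = 0" and "B v c = 0"
proof -
  have "B c v = B c (c \<cdot> v)"
    using B_assoc[of c c v] assms(1) by simp
  then have "B c v = \<alpha> * B c v"
    by (simp add: assms(2) B_scale_right)
  then show "B c v = 0"
    using assms(3) by simp
  have "B v c = B (v \<cdot> c) c"
    using B_assoc[of v c c] assms(1) by simp
  then have "B v c = \<alpha> * B v c"
    by (simp add: mult_commute[of v] assms(2) B_scale_left)
  then show "B v c = 0"
    using assms(3) by simp
qed

text \<open>
  For fixed u and v both sides of each identity are polynomial in c; the Frobenius form
  turns the condition that c spans its 1-eigenspace into such an identity.
\<close>

definition axis_identities where
  "axis_identities c \<longleftrightarrow> (\<forall>u v.
       c \<cdot> proj1 c u = proj1 c u \<and> c \<cdot> proj0 c u = 0
     \<and> c \<cdot> proj_half c u = (1/2) *s proj_half c u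
     \<and> proj1 c u = B c u *s c
     \<and> c \<cdot> (proj0 c u \<cdot> proj0 c v) = 0
     \<and> c \<cdot> (proj0 c u \<cdot> proj_half c v) = (1/2) *s (proj0 c u \<cdot> proj_half c v)
     \<and> proj_half c (proj_half c u \<cdot> proj_half c v) = 0)"

lemma axis_identities_if_axis:
  assumes c: "axis c"
  shows "axis_identities c"
  unfolding axis_identities_def
proof (intro allI conjI)
  fix u v
  show "c \<cdot> proj1 c u = proj1 c u" "c \<cdot> proj0 c u = 0"
    "c \<cdot> proj_half c u = (1/2) *s proj_half c u"
    by (rule axisD[OF c])+
  show "c \<cdot> (proj0 c u \<cdot> proj0 c v) = 0"
    by (rule axis_fusion_00[OF c axis_proj0[OF c] axis_proj0[OF c]])
  show "c \<cdot> (proj0 c u \<cdot> proj_half c v) = (1/2) *s (proj0 c u \<cdot> proj_half c v)"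
    by (rule axis_fusion_0h[OF c axis_proj0[OF c] axis_proj_half[OF c]])
  show "proj_half c (proj_half c u \<cdot> proj_half c v) = 0"
    by (rule axis_fusion_hh[OF c axis_proj_half[OF c] axis_proj_half[OF c]])
  obtain t where t: "proj1 c u = t *s c"
    using axis_eigenspace_1[OF c axis_proj1[OF c]] by blast
  have "B c (proj0 c u) = 0"
    by (rule B_eigenvector_orthogonal(1)[OF axis_idem[OF c], of _ 0]) (simp_all add: axis_proj0[OF c])
  moreover have "B c (proj_half c u) = 0"
    by (rule B_eigenvector_orthogonal(1)[OF axis_idem[OF c] axis_proj_half[OF c]]) simp
  ultimately have "B c u = t * B c c"
    using proj_sum[of c u] t by (metis B_add_right B_scale_right add.right_neutral)
  then show "proj1 c u = B c u *s c"
    using t B_axis[OF c] by simp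
qed

lemma axis_if_axis_identities:
  assumes "c \<noteq> 0" and "c \<cdot> c = c" and "axis_identities c"
  shows "axis c"
proof -
  note id = assms(3)[unfolded axis_identities_def, rule_format]
  show ?thesis
  proof (rule axisI[OF assms(1,2)])
    show "c \<cdot> proj1 c u = proj1 c u" "c \<cdot> proj0 c u = 0"
      "c \<cdot> proj_half c u = (1/2) *s proj_half c u" for u
      using id by blast+
    show "\<exists>t. w = t *s c" if "c \<cdot> w = w" for w
      using id[of w] proj_eigenvector_1[OF that] by metis
    show "c \<cdot> (v \<cdot> w) = 0" if "c \<cdot> v = 0" "c \<cdot> w = 0" for v w
      using id[of v w] proj_eigenvector_0 that by metis
    show "c \<cdot> (v \<cdot> w) = (1/2) *s (v \<cdot> w)" if "c \<cdot> v = 0" "c \<cdot> w = (1/2) *s w" for v w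
      using id[of v w] proj_eigenvector_0(2)[OF that(1)] proj_eigenvector_half(3)[OF that(2)] by metis
    show "proj_half c (v \<cdot> w) = 0" if "c \<cdot> v = (1/2) *s v" "c \<cdot> w = (1/2) *s w" for v w
      using id[of v w] proj_eigenvector_half(3) that by metis
  qed
qed

end

section \<open>Two axes a, b with (a, b) = 1\<close>

locale axis_pair = frobenius_algebra +
  fixes a b
  assumes axis_a: "axis a" and axis_b: "axis b" and B_a_b: "B a b = 1"
begin

definition z where "z = proj0 a b"

definition h where "h = proj_half a b"

lemma a_a: "a \<cdot> a = a"
  by (rule axis_idem[OF axis_a])

lemma a_z: "a \<cdot> z = 0"
  unfolding z_def by (rule axis_proj0[OF axis_a])

lemma a_h: "a \<cdot> h = (1/2) *s h"
  unfolding h_def by (rule axis_proj_half[OF axis_a])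

lemma proj1_a_b: "proj1 a b = a"
  using axis_identities_if_axis[OF axis_a] B_a_b unfolding axis_identities_def by simp

lemma b_decomposition: "a + z + h = b"
  \<comment> \<open>Stated in this direction: z and h are defined from b, so rewriting b would loop.\<close>
  using proj_sum[of a b] by (simp add: proj1_a_b z_def h_def)

lemma a_zz: "a \<cdot> (z \<cdot> z) = 0"
  by (rule axis_fusion_00[OF axis_a a_z a_z])

lemma a_zh: "a \<cdot> (z \<cdot> h) = (1/2) *s (z \<cdot> h)"
  by (rule axis_fusion_0h[OF axis_a a_z a_h])

lemma proj_half_hh: "proj_half a (h \<cdot> h) = 0"
  by (rule axis_fusion_hh[OF axis_a a_h a_h])

lemmas proj_a_eigenvectors = proj_eigenvector_1[OF a_a] proj_eigenvector_0[OF a_z]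
  proj_eigenvector_half[OF a_h] proj_eigenvector_0[OF a_zz] proj_eigenvector_half[OF a_zh]

lemma b_idem_components:
  shows z_h: "z \<cdot> h = 0"
    and proj1_hh: "proj1 a (h \<cdot> h) = 0"
    and zz_add_proj0_hh: "z \<cdot> z + proj0 a (h \<cdot> h) = z"
proof -
  have "b \<cdot> b = a \<cdot> a + z \<cdot> z + h \<cdot> h + 2 *s (a \<cdot> z) + 2 *s (a \<cdot> h) + 2 *s (z \<cdot> h)"
    using mult_self_sum3[of a z h] by (simp only: b_decomposition)
  then have bb: "b = a + z \<cdot> z + h \<cdot> h + h + 2 *s (z \<cdot> h)"
    using axis_idem[OF axis_b] by (simp add: a_a a_z a_h)
  show "z \<cdot> h = 0" "proj1 a (h \<cdot> h) = 0" "z \<cdot> z + proj0 a (h \<cdot> h) = z"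
    using arg_cong[OF bb, of "proj_half a"] arg_cong[OF bb, of "proj1 a"] arg_cong[OF bb, of "proj0 a"]
    by (simp_all add: proj_add proj_scale proj_a_eigenvectors proj_half_hh proj1_a_b
        flip: z_def h_def)
qed

lemma proj0_hh: "proj0 a (h \<cdot> h) = h \<cdot> h"
  using proj_sum[of a "h \<cdot> h"] proj1_hh proj_half_hh by simp

lemma B_b_a: "B b a = 1"
proof -
  have "B z a = 0"
    by (rule B_eigenvector_orthogonal(2)[OF a_a, of z 0]) (simp_all add: a_z)
  moreover have "B h a = 0"
    by (rule B_eigenvector_orthogonal(2)[OF a_a a_h]) simp
  ultimately show ?thesis
    using B_axis[OF axis_a] B_add_left[of "a + z" h a] B_add_left[of a z a]
    by (simp add: b_decomposition)
qed

text \<open>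
  The component of a in the 1-eigenspace of b is (b,a) b = b; the claim is the component of
  this identity in the 0-eigenspace of a.
\<close>

lemma h_h: "h \<cdot> h = z"
proof -
  have "proj1 b a = b"
    using axis_identities_if_axis[OF axis_b] B_b_a unfolding axis_identities_def by simp
  then have "2 *s (b \<cdot> (b \<cdot> a)) - b \<cdot> a = b"
    by (simp add: proj1_def)
  moreover have ba: "b \<cdot> a = a + (1/2) *s h"
    using mult_add_left[of "a + z" h a] mult_add_left[of a z a]
    by (simp add: b_decomposition a_a mult_commute[of z a] mult_commute[of h a] a_z a_h)
  moreover have bh: "b \<cdot> h = (1/2) *s h + h \<cdot> h"
    using mult_add_left[of "a + z" h h] mult_add_left[of a z h]
    by (simp add: b_decomposition a_h z_h)
  ultimately have "proj0 a (2 *s (b \<cdot> (a + (1/2) *s h)) - (a + (1/2) *s h)) = proj0 a b"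
    by simp
  then show ?thesis
    by (simp add: mult_distribs ba bh proj_add proj_diff proj_scale proj_a_eigenvectors proj0_hh
        flip: z_def)
qed

lemma z_z: "z \<cdot> z = 0"
  using zz_add_proj0_hh by (simp add: h_h proj_a_eigenvectors)

definition jvec where
  "jvec p q r = p *s a + q *s h + r *s z"

lemma jvec_add: "jvec p q r + jvec p' q' r' = jvec (p + p') (q + q') (r + r')"
  by (simp add: jvec_def algebra_simps)

lemma jvec_diff: "jvec p q r - jvec p' q' r' = jvec (p - p') (q - q') (r - r')"
  by (simp add: jvec_def algebra_simps)

lemma jvec_scale: "t *s jvec p q r = jvec (t * p) (t * q) (t * r)"
  by (simp add: jvec_def algebra_simps)

lemma jvec_mult: "jvec p q r \<cdot> jvec p' q' r' = jvec (p * p') ((p * q' + q * p') / 2) (q * q')"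
  by (simp add: jvec_def mult_distribs a_a a_z a_h z_h h_h z_z mult_commute[of z a]
      mult_commute[of h a] mult_commute[of h z] add_divide_distrib algebra_simps)

lemma jvec_0_0_0: "jvec 0 0 0 = 0"
  and jvec_1_0_0: "jvec 1 0 0 = a"
  and jvec_1_1_1: "jvec 1 1 1 = b"
  using b_decomposition by (simp_all add: jvec_def add_ac)

lemma b_mult_jvec: "b \<cdot> jvec p q r = jvec p ((p + q) / 2) q"
  using jvec_mult[of 1 1 1 p q r] by (simp add: jvec_1_1_1 add.commute)

lemma proj_jvec:
  "proj1 a (jvec p q r) = p *s a"
  "proj0 a (jvec p q r) = r *s z"
  "proj_half a (jvec p q r) = q *s h"
  using proj_eigenvector_1[OF a_a] proj_eigenvector_0[OF a_z] proj_eigenvector_half[OF a_h]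
  by (simp_all add: jvec_def proj_add proj_scale)

lemma gen_subalg_jvec: "c \<in> gen_subalg scale mult {a, b} \<Longrightarrow> \<exists>p q r. c = jvec p q r"
proof (induction rule: gen_subalg.induct)
  case (gen_base c)
  then consider "c = a" | "c = b"
    by blast
  then show ?case
    by cases (metis jvec_1_0_0, metis jvec_1_1_1)
next
  case gen_zero
  then show ?case
    using jvec_0_0_0 by metis
next
  case (gen_add c d)
  then show ?case
    using jvec_add by metis
next
  case (gen_scale c t)
  then show ?case
    using jvec_scale by metis
next
  case (gen_mult c d)
  then show ?case
    using jvec_mult by metis
qed

definition curve where
  "curve x = jvec 1 x (x\<^sup>2)"

lemma idempotent_jvec_eq_curve:
  assumes c: "c = jvec p q r" and "c \<cdot> c = c" and "c \<noteq> 0"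
  shows "c = curve q"
proof -
  have "jvec (p * p) (p * q) (q * q) = jvec p q r"
    using assms(2) by (simp add: c jvec_mult algebra_simps)
  from arg_cong[OF this, of "proj1 a"] arg_cong[OF this, of "proj_half a"]
    arg_cong[OF this, of "proj0 a"]
  have p: "p * p = p" and q: "(p * q) *s h = q *s h" and r: "(q * q) *s z = r *s z"
    using axis_nonzero[OF axis_a] by (simp_all add: proj_jvec)
  show ?thesis
  proof (cases "p = 0")
    case True
    then have "q *s h = 0"
      using q by simp
    have "c = q *s h + r *s z"
      by (simp add: c jvec_def True)
    also have "r *s z = (q * q) *s z"
      by (rule r[symmetric])
    also have "\<dots> = (q *s h) \<cdot> (q *s h)"
      by (simp add: mult_scale_left mult_scale_right h_h)
    finally show ?thesis
      using \<open>q *s h = 0\<close> assms(3) by simp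
  next
    case False
    then have "p = 1"
      using p by simp
    then have "c = a + q *s h + r *s z"
      by (simp add: c jvec_def)
    also have "r *s z = (q * q) *s z"
      by (rule r[symmetric])
    finally show ?thesis
      by (simp add: curve_def jvec_def power2_eq_square)
  qed
qed

lemma miyamoto_a_curve: "miyamoto a (curve x) = curve (- x)"
  unfolding miyamoto_def curve_def proj_jvec by (simp add: jvec_def algebra_simps)

lemma miyamoto_b_curve: "miyamoto b (curve x) = curve (2 - x)"
  unfolding miyamoto_def proj_half_def proj1_def proj0_def curve_def
  by (simp add: b_mult_jvec jvec_add jvec_diff jvec_scale) (simp add: field_simps power2_eq_square)

lemma axis_curve_of_nat: "axis (curve (of_nat n))"
proof (induction n rule: nat_induct2)
  case 0
  then show ?case
    using axis_a by (simp add: curve_def jvec_1_0_0)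
next
  case 1
  then show ?case
    using axis_b by (simp add: curve_def jvec_1_1_1)
next
  case (step n)
  have "curve (of_nat (n + 2)) = miyamoto b (miyamoto a (curve (of_nat n)))"
    by (simp add: miyamoto_a_curve miyamoto_b_curve add.commute)
  then show ?case
    using axis_miyamoto_image axis_a axis_b step by simp
qed

lemma poly_map_curve: "poly_map curve"
proof -
  have "curve = (\<lambda>x. a + x *s (h + x *s z))"
    by (auto simp: curve_def jvec_def power2_eq_square algebra_simps)
  then show ?thesis
    by (simp add: poly_map_add poly_map_const poly_map_var_scale)
qed

lemma axis_identities_curve: "axis_identities (curve x)"
proof -
  have transfer: "P (curve x) = Q (curve x)"
    if "\<And>c. axis_identities c \<Longrightarrow> P c = Q c"
      "poly_map (\<lambda>x. P (curve x))" "poly_map (\<lambda>x. Q (curve x))" for P Q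
    using poly_map_eq_on_nat[OF that(2,3)] that(1) axis_identities_if_axis axis_curve_of_nat
    by blast
  note intros = poly_map_curve poly_map_const poly_map_add poly_map_diff poly_map_scale poly_map_mult
  note defs = proj1_def proj0_def proj_half_def
  show ?thesis
    unfolding axis_identities_def
  proof (intro allI conjI)
    fix u v
    show "curve x \<cdot> proj1 (curve x) u = proj1 (curve x) u"
      by (rule transfer[where P = "\<lambda>c. c \<cdot> proj1 c u" and Q = "\<lambda>c. proj1 c u"])
        (unfold axis_identities_def, blast, simp_all add: defs intros)
    show "curve x \<cdot> proj0 (curve x) u = 0"
      by (rule transfer[where P = "\<lambda>c. c \<cdot> proj0 c u" and Q = "\<lambda>c. 0"])
        (unfold axis_identities_def, blast, simp_all add: defs intros)
    show "curve x \<cdot> proj_half (curve x) u = (1/2) *s proj_half (curve x) u"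
      by (rule transfer[where P = "\<lambda>c. c \<cdot> proj_half c u" and Q = "\<lambda>c. (1/2) *s proj_half c u"])
        (unfold axis_identities_def, blast, simp_all add: defs intros)
    have "poly_map (\<lambda>x. B (curve x) u *s curve x)"
      by (rule poly_map_functional_scale[OF poly_map_curve poly_map_curve])
        (simp_all add: B_add_left B_scale_left)
    then show "proj1 (curve x) u = B (curve x) u *s curve x"
      by (rule transfer[where P = "\<lambda>c. proj1 c u" and Q = "\<lambda>c. B c u *s c", rotated 2])
        (unfold axis_identities_def, blast, simp add: defs intros)
    show "curve x \<cdot> (proj0 (curve x) u \<cdot> proj0 (curve x) v) = 0"
      by (rule transfer[where P = "\<lambda>c. c \<cdot> (proj0 c u \<cdot> proj0 c v)" and Q = "\<lambda>c. 0"])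
        (unfold axis_identities_def, blast, simp_all add: defs intros)
    show "curve x \<cdot> (proj0 (curve x) u \<cdot> proj_half (curve x) v)
        = (1/2) *s (proj0 (curve x) u \<cdot> proj_half (curve x) v)"
      by (rule transfer[where P = "\<lambda>c. c \<cdot> (proj0 c u \<cdot> proj_half c v)"
            and Q = "\<lambda>c. (1/2) *s (proj0 c u \<cdot> proj_half c v)"])
        (unfold axis_identities_def, blast, simp_all add: defs intros)
    show "proj_half (curve x) (proj_half (curve x) u \<cdot> proj_half (curve x) v) = 0"
      by (rule transfer[where P = "\<lambda>c. proj_half c (proj_half c u \<cdot> proj_half c v)"
            and Q = "\<lambda>c. 0"])
        (unfold axis_identities_def, blast, simp_all add: defs intros)
  qed
qed

lemma axis_curve: "axis (curve x)"
proof (rule axis_if_axis_identities[OF _ _ axis_identities_curve])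
  have "proj1 a (curve x) = a"
    by (simp add: curve_def proj_jvec)
  then show "curve x \<noteq> 0"
    using axis_nonzero[OF axis_a] by (auto simp: proj1_def)
  show "curve x \<cdot> curve x = curve x"
    by (simp add: curve_def jvec_mult power2_eq_square)
qed

theorem solid: "\<forall>c \<in> gen_subalg scale mult {a, b}. c \<noteq> 0 \<and> c \<cdot> c = c \<longrightarrow> axis c"
  using gen_subalg_jvec idempotent_jvec_eq_curve axis_curve by metis

end

theorem proposition6p5:
  fixes sc :: "'k::field_char_0 \<Rightarrow> 'v::ab_group_add \<Rightarrow> 'v"
    and mu :: "'v \<Rightarrow> 'v \<Rightarrow> 'v"
    and B :: "'v \<Rightarrow> 'v \<Rightarrow> 'k"
    and a b :: 'v
  assumes "jordan_half_algebra sc mu"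
    and "frobenius_form sc mu B"
    and "primitive_axis sc mu a"
    and "primitive_axis sc mu b"
    and "B a b = 1"
  shows "\<forall>c \<in> gen_subalg sc mu {a, b}. c \<noteq> 0 \<and> mu c c = c \<longrightarrow> primitive_axis sc mu c"
proof -
  have "comm_algebra sc mu"
    using assms(1) unfolding jordan_half_algebra_def by blast
  then interpret axis_pair sc mu B a b
    using assms(2-5)
    unfolding comm_algebra_def axis_pair_def axis_pair_axioms_def frobenius_algebra_def
      frobenius_algebra_axioms_def commutative_algebra_def commutative_algebra_axioms_def
    by blast
  show ?thesis
    by (rule solid)
qed

end
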